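(* Let $c \ge 3$, let $H$ be a convex polygon in the plane with $c$ vertices, and let $T$ be a triangulation of $H$. Then every Sperner labelling of $T$ has a triangle of $T$ whose three vertices have three different labels.
   Context: A triangulation $T$ of $H$ is a subdivision of $H$ into finitely many triangles meeting face-to-face, whose vertex set contains the vertices of $H$. A Sperner labelling of $T$ is a function from the vertices of $T$ to $\{0,\dots,c-1\}$ such that the $c$ vertices of $H$ receive pairwise different labels, and every vertex of $T$ lying on the boundary of $H$ between two consecutive vertices $u,w$ of $H$ (on the edge $uw$) receives the label of $u$ or the label of $w$. *)

theory Defs
  imports "HOL-Analysis.Analysis"
begin

definition polygon_vertices :: "(real^2) set \<Rightarrow> (real^2) set" where
  "polygon_vertices H = {v. v extreme_point_of H}"

definition convex_polygon :: "(real^2) set \<Rightarrow> nat \<Rightarrow> bool" where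
  "convex_polygon H c \<longleftrightarrow> polytope H \<and> aff_dim H = 2 \<and> card (polygon_vertices H) = c"

definition tri_vertices :: "(real^2) set set \<Rightarrow> (real^2) set" where
  "tri_vertices T = (\<Union>t\<in>T. {v. v extreme_point_of t})"

text \<open>T is a triangulation of H: finitely many triangles (2-simplices) meeting
  face-to-face, covering H, whose vertex set contains the vertices of H.\<close>
definition triangulation_of :: "(real^2) set set \<Rightarrow> (real^2) set \<Rightarrow> bool" where
  "triangulation_of T H \<longleftrightarrow>
     triangulation T \<and> (\<forall>t\<in>T. 2 simplex t) \<and> \<Union>T = H \<and>
     polygon_vertices H \<subseteq> tri_vertices T"

definition sperner_labelling ::
  "(real^2) set \<Rightarrow> nat \<Rightarrow> (real^2) set set \<Rightarrow> (real^2 \<Rightarrow> nat) \<Rightarrow> bool" where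
  "sperner_labelling H c T L \<longleftrightarrow>
     (\<forall>x\<in>tri_vertices T. L x < c) \<and>
     inj_on L (polygon_vertices H) \<and>
     (\<forall>u w x. u \<in> polygon_vertices H \<and> w \<in> polygon_vertices H \<and> u \<noteq> w \<and>
              closed_segment u w face_of H \<and>
              x \<in> tri_vertices T \<and> x \<in> closed_segment u w
              \<longrightarrow> L x = L u \<or> L x = L w)"

end

theory Submission
  imports Defs
begin

(* Sperner's lemma via Brouwer's fixed point theorem.  Interpolating the indicator of a set C of
   labels linearly over each triangle gives a continuous weight w_C on H, and the weights of a
   partition of the labels sum to 1.  Fix an edge uw of H, let p = w_{L w} and let q be the weight
   of the labels other than L u and L w.  If no triangle is fully labelled, then at every point one
   of w_{L u}, p, q vanishes, so the map sending x to g (p x) if q x = 0 and to w + p x (u - w)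
   otherwise is continuous; here g is a path from w to u along the boundary of H that avoids the
   open edge.  This map sends H into H, and the Sperner condition on the boundary shows that it has
   no fixed point, contradicting Brouwer's theorem. *)

section \<open>Barycentric coordinates\<close>

lemma affine_coordinates_unique:
  fixes C :: "'a::real_vector set"
  assumes "finite C" "\<not> affine_dependent C" "v \<in> C"
    and "sum l C = 1" "(\<Sum>v\<in>C. l v *\<^sub>R v) = x"
    and "sum m C = 1" "(\<Sum>v\<in>C. m v *\<^sub>R v) = x"
  shows "l v = m v"
proof -
  have "sum (\<lambda>v. l v - m v) C = 0" "(\<Sum>v\<in>C. (l v - m v) *\<^sub>R v) = 0"
    using assms by (simp_all add: sum_subtractf scaleR_diff_left)
  then show ?thesis
    using assms(1-3) affine_dependent_explicit_finite[OF assms(1)] by auto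
qed

definition barycentric :: "'a::real_vector set \<Rightarrow> 'a \<Rightarrow> 'a \<Rightarrow> real" where
  "barycentric C x =
     (THE l. (\<forall>v. v \<notin> C \<longrightarrow> l v = 0) \<and> sum l C = 1 \<and> (\<Sum>v\<in>C. l v *\<^sub>R v) = x)"

lemma barycentric_eqI:
  fixes C :: "'a::real_vector set"
  assumes "finite C" "\<not> affine_dependent C"
    and "\<And>v. v \<notin> C \<Longrightarrow> l v = 0" "sum l C = 1" "(\<Sum>v\<in>C. l v *\<^sub>R v) = x"
  shows "barycentric C x = l"
  unfolding barycentric_def
proof (rule the_equality)
  fix m assume m: "(\<forall>v. v \<notin> C \<longrightarrow> m v = 0) \<and> sum m C = 1 \<and> (\<Sum>v\<in>C. m v *\<^sub>R v) = x"
  show "m = l"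
  proof
    fix v show "m v = l v"
      using m assms affine_coordinates_unique[of C v m x l] by (cases "v \<in> C") auto
  qed
qed (use assms in auto)

lemma barycentric_coordinates:
  fixes C :: "'a::real_vector set"
  assumes "finite C" "\<not> affine_dependent C" "x \<in> affine hull C"
  shows "\<And>v. v \<notin> C \<Longrightarrow> barycentric C x v = 0"
    and "sum (barycentric C x) C = 1"
    and "(\<Sum>v\<in>C. barycentric C x v *\<^sub>R v) = x"
proof -
  obtain u where u: "sum u C = 1" "(\<Sum>v\<in>C. u v *\<^sub>R v) = x"
    using assms(1,3) affine_hull_finite by blast
  define l where "l v = (if v \<in> C then u v else 0)" for v
  have "barycentric C x = l"
    by (rule barycentric_eqI) (use assms u in \<open>auto simp: l_def cong: sum.cong\<close>)
  then show "\<And>v. v \<notin> C \<Longrightarrow> barycentric C x v = 0" "sum (barycentric C x) C = 1"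
    "(\<Sum>v\<in>C. barycentric C x v *\<^sub>R v) = x"
    using u by (auto simp: l_def cong: sum.cong)
qed

text \<open>Up to a constant, each barycentric coordinate is a linear function.\<close>
lemma continuous_on_barycentric:
  fixes C :: "'a::euclidean_space set"
  assumes "finite C" "\<not> affine_dependent C" "affine hull C = UNIV"
  shows "continuous_on S (\<lambda>x. barycentric C x v)"
proof -
  note coords = barycentric_coordinates[OF assms(1,2), unfolded assms(3), OF UNIV_I]
  have add: "barycentric C (x + y) = (\<lambda>v. barycentric C x v + barycentric C y v - barycentric C 0 v)"
    for x y
    by (rule barycentric_eqI[OF assms(1,2)])
       (simp_all add: coords sum.distrib sum_subtractf scaleR_add_left scaleR_diff_left)
  have scale: "barycentric C (r *\<^sub>R x) = (\<lambda>v. r * barycentric C x v + (1 - r) * barycentric C 0 v)"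
    for r x
    by (rule barycentric_eqI[OF assms(1,2)])
       (simp_all add: coords sum.distrib scaleR_add_left
          flip: sum_distrib_left scaleR_scaleR scaleR_sum_right)
  have "linear (\<lambda>x. barycentric C x v - barycentric C 0 v)"
    by (rule linearI) (auto simp: add scale algebra_simps)
  then have "continuous_on S (\<lambda>x. (barycentric C x v - barycentric C 0 v) + barycentric C 0 v)"
    by (intro continuous_intros linear_continuous_on linear_conv_bounded_linear[THEN iffD1])
  then show ?thesis by simp
qed

definition extreme_points :: "'a::real_vector set \<Rightarrow> 'a set" where
  "extreme_points S = {v. v extreme_point_of S}"

lemma extreme_points_subset: "extreme_points S \<subseteq> S"
  by (auto simp: extreme_points_def extreme_point_of_def)

lemma full_simplex_extreme_points:
  fixes t :: "'a::euclidean_space set"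
  assumes "int DIM('a) simplex t"
  shows "finite (extreme_points t)" "\<not> affine_dependent (extreme_points t)"
    "card (extreme_points t) = DIM('a) + 1" "t = convex hull (extreme_points t)"
    "affine hull (extreme_points t) = UNIV"
proof -
  obtain C where C: "\<not> affine_dependent C" "card C = DIM('a) + 1" "t = convex hull C"
    using assms unfolding simplex_def by (metis of_nat_1 of_nat_add of_nat_eq_iff)
  have E: "extreme_points t = C"
    using C(1,3) extreme_point_of_convex_hull_affine_independent by (auto simp: extreme_points_def)
  have "aff_dim C = DIM('a)"
    using aff_dim_affine_independent[OF C(1)] C(2) by simp
  then show "affine hull (extreme_points t) = UNIV"
    using E aff_dim_eq_full by metis
  show "finite (extreme_points t)" "\<not> affine_dependent (extreme_points t)"
    "card (extreme_points t) = DIM('a) + 1" "t = convex hull (extreme_points t)"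
    using C E aff_independent_finite by simp_all
qed

lemma full_simplex_polytope:
  fixes t :: "'a::euclidean_space set"
  assumes "int DIM('a) simplex t"
  shows "polytope t"
  unfolding polytope_def using full_simplex_extreme_points[OF assms] by blast

lemma barycentric_full_simplex:
  fixes t :: "'a::euclidean_space set"
  assumes "int DIM('a) simplex t" "x \<in> t"
  defines "V \<equiv> extreme_points t"
  shows "\<And>v. v \<notin> V \<Longrightarrow> barycentric V x v = 0" "sum (barycentric V x) V = 1"
    "(\<Sum>v\<in>V. barycentric V x v *\<^sub>R v) = x" "0 \<le> barycentric V x v"
proof -
  note V = full_simplex_extreme_points[OF assms(1), folded V_def]
  show "\<And>v. v \<notin> V \<Longrightarrow> barycentric V x v = 0" "sum (barycentric V x) V = 1"
    "(\<Sum>v\<in>V. barycentric V x v *\<^sub>R v) = x"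
    using barycentric_coordinates[OF V(1,2)] V(5) by auto
  obtain u where u: "\<forall>y\<in>V. 0 \<le> u y" "sum u V = 1" "(\<Sum>y\<in>V. u y *\<^sub>R y) = x"
    using assms(2) V(4) convex_hull_finite[OF V(1)] by blast
  have "barycentric V x = (\<lambda>v. if v \<in> V then u v else 0)"
    by (rule barycentric_eqI[OF V(1,2)]) (use u in \<open>auto cong: sum.cong\<close>)
  then show "0 \<le> barycentric V x v" using u by auto
qed

lemma barycentric_vertex:
  fixes C :: "'a::real_vector set"
  assumes "finite C" "\<not> affine_dependent C" "w \<in> C"
  shows "barycentric C w v = (if v = w then 1 else 0)"
proof -
  have "barycentric C w = (\<lambda>v. if v = w then 1 else 0)"
  proof (rule barycentric_eqI[OF assms(1,2)])
    have "(\<Sum>v\<in>C. (if v = w then 1 else 0) *\<^sub>R v) = (\<Sum>v\<in>C. if v = w then v else 0)"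
      by (rule sum.cong) auto
    then show "(\<Sum>v\<in>C. (if v = w then 1 else 0) *\<^sub>R v) = w"
      using assms(1,3) by simp
  qed (use assms in auto)
  then show ?thesis by simp
qed

lemma convex_combination_in_face:
  fixes P :: "'a::euclidean_space set"
  assumes "polyhedron P" "F face_of P" "finite C" "C \<subseteq> P"
    and "\<And>v. v \<in> C \<Longrightarrow> 0 \<le> l v" "sum l C = 1" "(\<Sum>v\<in>C. l v *\<^sub>R v) \<in> F"
    and "v \<in> C" "l v \<noteq> 0"
  shows "v \<in> F"
proof -
  obtain a b where ab: "P \<subseteq> {y. a \<bullet> y \<le> b}" "F = P \<inter> {y. a \<bullet> y = b}"
    using assms(2) exposed_face_of_polyhedron[OF assms(1)] unfolding exposed_face_of_def by blast
  have "(\<Sum>y\<in>C. l y * (a \<bullet> y)) = b"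
    using assms(7) unfolding ab(2) by (simp add: inner_sum_right)
  moreover have "(\<Sum>y\<in>C. l y * b) = b"
    using assms(6) by (simp flip: sum_distrib_right)
  ultimately have "(\<Sum>y\<in>C. l y * (b - a \<bullet> y)) = 0"
    by (simp add: right_diff_distrib sum_subtractf)
  moreover have "0 \<le> l y * (b - a \<bullet> y)" if "y \<in> C" for y
    using that assms(4,5) ab(1) by (simp add: subset_iff)
  ultimately have "l v * (b - a \<bullet> v) = 0"
    using assms(8) by (simp add: sum_nonneg_eq_0_iff[OF assms(3)])
  then have "a \<bullet> v = b"
    using assms(9) by simp
  then show ?thesis
    using assms(4,8) ab(2) by blast
qed

section \<open>Piecewise linear interpolation over a triangulation\<close>

definition simplex_interpolation :: "'a::real_vector set \<Rightarrow> ('a \<Rightarrow> real) \<Rightarrow> 'a \<Rightarrow> real" where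
  "simplex_interpolation t \<phi> x =
     (\<Sum>v\<in>extreme_points t. barycentric (extreme_points t) x v * \<phi> v)"

definition pl_extension :: "'a::real_vector set set \<Rightarrow> ('a \<Rightarrow> real) \<Rightarrow> 'a \<Rightarrow> real" where
  "pl_extension T \<phi> x = simplex_interpolation (SOME t. t \<in> T \<and> x \<in> t) \<phi> x"

lemma barycentric_support_in_common_face:
  fixes T :: "'a::euclidean_space set set"
  assumes "triangulation T" "\<forall>t\<in>T. int DIM('a) simplex t"
    and "t \<in> T" "t' \<in> T" "x \<in> t" "x \<in> t'"
    and "v \<in> extreme_points t" "barycentric (extreme_points t) x v \<noteq> 0"
  shows "v \<in> extreme_points t'"
proof -
  have simplex_t: "int DIM('a) simplex t"
    using assms(2,3) by blast
  note V = full_simplex_extreme_points[OF simplex_t]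
  note l = barycentric_full_simplex[OF simplex_t assms(5)]
  have "(t \<inter> t') face_of t" "(t' \<inter> t) face_of t'"
    using assms(1,3,4) unfolding triangulation_def by blast+
  then have faces: "(t \<inter> t') face_of t" "(t \<inter> t') face_of t'"
    by (simp_all add: Int_commute)
  have "v \<in> t \<inter> t'"
    by (rule convex_combination_in_face[OF polytope_imp_polyhedron[OF full_simplex_polytope[OF simplex_t]]
          faces(1) V(1) _ l(4) l(2)])
       (use assms(5-8) l(3) extreme_points_subset in auto)
  then show ?thesis
    using assms(7) extreme_point_of_face[OF faces(1)] extreme_point_of_face[OF faces(2)]
    by (auto simp: extreme_points_def)
qed

lemma simplex_interpolation_agree:
  fixes T :: "'a::euclidean_space set set"
  assumes "triangulation T" "\<forall>t\<in>T. int DIM('a) simplex t"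
    and "t \<in> T" "t' \<in> T" "x \<in> t" "x \<in> t'"
  shows "simplex_interpolation t \<phi> x = simplex_interpolation t' \<phi> x"
proof -
  define V V' where "V = extreme_points t" and "V' = extreme_points t'"
  define l where "l = barycentric V x"
  have "int DIM('a) simplex t" "int DIM('a) simplex t'"
    using assms(2-4) by auto
  note St = full_simplex_extreme_points[OF this(1), folded V_def]
    and St' = full_simplex_extreme_points[OF this(2), folded V'_def]
    and l = barycentric_full_simplex[OF this(1) assms(5), folded V_def, folded l_def]
  have l_support: "v \<in> V \<and> v \<in> V'" if "l v \<noteq> 0" for v
    using that l(1) barycentric_support_in_common_face[OF assms]
    unfolding V_def V'_def l_def by blast
  have same_sum: "sum g V = sum g V'" if "\<And>v. g v \<noteq> 0 \<Longrightarrow> v \<in> V \<and> v \<in> V'"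
    for g :: "_ \<Rightarrow> 'b::comm_monoid_add"
  proof -
    have "sum g V = sum g (V \<inter> V')" "sum g V' = sum g (V \<inter> V')"
      by (intro sum.mono_neutral_right St(1) St'(1); use that in blast)+
    then show ?thesis by simp
  qed
  have "sum l V' = sum l V" "(\<Sum>v\<in>V'. l v *\<^sub>R v) = (\<Sum>v\<in>V. l v *\<^sub>R v)"
    "(\<Sum>v\<in>V'. l v * \<phi> v) = (\<Sum>v\<in>V. l v * \<phi> v)"
    by (rule same_sum[symmetric]; use l_support in fastforce)+
  then have "barycentric V' x = l"
    using l(1-3) l_support by (intro barycentric_eqI[OF St'(1,2)]) auto
  then show ?thesis
    unfolding simplex_interpolation_def V_def[symmetric] V'_def[symmetric] l_def[symmetric]
    using \<open>(\<Sum>v\<in>V'. l v * \<phi> v) = (\<Sum>v\<in>V. l v * \<phi> v)\<close> by simp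
qed

lemma pl_extension_eq:
  fixes T :: "'a::euclidean_space set set"
  assumes "triangulation T" "\<forall>t\<in>T. int DIM('a) simplex t" "t \<in> T" "x \<in> t"
  shows "pl_extension T \<phi> x = simplex_interpolation t \<phi> x"
proof -
  define s where "s = (SOME t. t \<in> T \<and> x \<in> t)"
  have "s \<in> T \<and> x \<in> s"
    unfolding s_def using someI[of "\<lambda>t. t \<in> T \<and> x \<in> t" t] assms(3,4) by blast
  then show ?thesis
    unfolding pl_extension_def s_def[symmetric]
    using assms(3,4) by (intro simplex_interpolation_agree[OF assms(1,2)]) auto
qed

lemma continuous_on_pl_extension:
  fixes T :: "'a::euclidean_space set set"
  assumes "triangulation T" "\<forall>t\<in>T. int DIM('a) simplex t"
  shows "continuous_on (\<Union>T) (pl_extension T \<phi>)"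
proof -
  have "continuous_on (\<Union>t\<in>T. t) (pl_extension T \<phi>)"
  proof (rule continuous_on_closed_Union)
    show "finite T" using assms(1) unfolding triangulation_def by blast
  next
    fix t assume "t \<in> T"
    then have simplex_t: "int DIM('a) simplex t" using assms(2) by blast
    note St = full_simplex_extreme_points[OF simplex_t]
    show "closed t"
      using polytope_imp_closed[OF full_simplex_polytope[OF simplex_t]] .
    have "continuous_on t (simplex_interpolation t \<phi>)"
      unfolding simplex_interpolation_def
      by (intro continuous_intros continuous_on_barycentric St(1,2,5))
    then show "continuous_on t (pl_extension T \<phi>)"
      by (rule continuous_on_eq) (use pl_extension_eq[OF assms \<open>t \<in> T\<close>] in auto)
  qed
  then show ?thesis by simp
qed

lemma pl_extension_vertex:
  fixes T :: "'a::euclidean_space set set"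
  assumes "triangulation T" "\<forall>t\<in>T. int DIM('a) simplex t" "t \<in> T" "v \<in> extreme_points t"
  shows "pl_extension T \<phi> v = \<phi> v"
proof -
  note St = full_simplex_extreme_points[OF bspec[OF assms(2,3)]]
  have "pl_extension T \<phi> v = (\<Sum>w\<in>extreme_points t. (if w = v then \<phi> v else 0))"
    unfolding pl_extension_eq[OF assms(1-3) extreme_points_subset[THEN subsetD, OF assms(4)]]
      simplex_interpolation_def
    by (rule sum.cong) (simp_all add: barycentric_vertex[OF St(1,2) assms(4)])
  then show ?thesis
    using St(1) assms(4) by simp
qed

lemma pl_extension_add:
  "pl_extension T (\<lambda>v. \<phi> v + \<psi> v) x = pl_extension T \<phi> x + pl_extension T \<psi> x"
  by (simp add: pl_extension_def simplex_interpolation_def distrib_left sum.distrib)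

lemma pl_extension_const:
  fixes T :: "'a::euclidean_space set set"
  assumes "triangulation T" "\<forall>t\<in>T. int DIM('a) simplex t" "x \<in> \<Union>T"
  shows "pl_extension T (\<lambda>v. c) x = c"
proof -
  obtain t where t: "t \<in> T" "x \<in> t" using assms(3) by blast
  then show ?thesis
    using barycentric_full_simplex(2)[OF bspec[OF assms(2) t(1)] t(2)]
    by (simp add: pl_extension_eq[OF assms(1,2) t] simplex_interpolation_def
        flip: sum_distrib_right)
qed

lemma pl_extension_nonneg:
  fixes T :: "'a::euclidean_space set set"
  assumes "triangulation T" "\<forall>t\<in>T. int DIM('a) simplex t" "x \<in> \<Union>T" "\<And>v. 0 \<le> \<phi> v"
  shows "0 \<le> pl_extension T \<phi> x"
proof -
  obtain t where t: "t \<in> T" "x \<in> t" using assms(3) by blast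
  then show ?thesis
    using barycentric_full_simplex(4)[OF bspec[OF assms(2) t(1)] t(2)] assms(4)
    by (simp add: pl_extension_eq[OF assms(1,2) t] simplex_interpolation_def sum_nonneg)
qed

lemma pl_extension_nonzero:
  fixes T :: "'a::euclidean_space set set"
  assumes "triangulation T" "\<forall>t\<in>T. int DIM('a) simplex t" "t \<in> T" "x \<in> t"
    and "pl_extension T \<phi> x \<noteq> 0"
  shows "\<exists>v\<in>extreme_points t. \<phi> v \<noteq> 0"
proof (rule ccontr)
  assume "\<not> (\<exists>v\<in>extreme_points t. \<phi> v \<noteq> 0)"
  then show False
    using assms(5) unfolding pl_extension_eq[OF assms(1-4)] simplex_interpolation_def by simp
qed

lemma pl_extension_on_face:
  fixes T :: "'a::euclidean_space set set"
  assumes "triangulation T" "\<forall>t\<in>T. int DIM('a) simplex t" "polyhedron (\<Union>T)"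
    and "F face_of \<Union>T" "x \<in> F"
    and "\<And>t v. t \<in> T \<Longrightarrow> v \<in> extreme_points t \<Longrightarrow> v \<in> F \<Longrightarrow> \<phi> v = 0"
  shows "pl_extension T \<phi> x = 0"
proof -
  obtain t where t: "t \<in> T" "x \<in> t"
    using assms(4,5) face_of_imp_subset by blast
  have simplex_t: "int DIM('a) simplex t" using assms(2) t(1) by blast
  note St = full_simplex_extreme_points[OF simplex_t]
  note l = barycentric_full_simplex[OF simplex_t t(2)]
  have "v \<in> F" if "v \<in> extreme_points t" "barycentric (extreme_points t) x v \<noteq> 0" for v
    by (rule convex_combination_in_face[OF assms(3,4) St(1) _ l(4) l(2)])
       (use t extreme_points_subset assms(5) l(3) that in auto)
  then show ?thesis
    unfolding pl_extension_eq[OF assms(1,2) t] simplex_interpolation_def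
    using assms(6)[OF t(1)] by (intro sum.neutral) auto
qed

section \<open>Radial projection onto the boundary of a convex body\<close>

lemma ray_meets_rel_frontier_once:
  fixes S :: "'a::euclidean_space set"
  assumes "convex S" "a \<in> rel_interior S" "0 < d" "0 < e"
    and "a + d *\<^sub>R l \<in> rel_frontier S" "a + e *\<^sub>R l \<in> rel_frontier S"
  shows "d = e"
proof -
  have less: False if "0 < d" "d < e" "a + d *\<^sub>R l \<in> rel_frontier S" "a + e *\<^sub>R l \<in> rel_frontier S"
    for d e
  proof -
    have "l \<noteq> 0"
      using that(3) assms(2) by (auto simp: rel_frontier_def)
    then have "a + d *\<^sub>R l \<in> open_segment a (a + e *\<^sub>R l)"
      unfolding in_segment using that(1,2)
      by (intro conjI exI[of _ "d / e"]) (auto simp: algebra_simps)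
    moreover have "open_segment a (a + e *\<^sub>R l) \<subseteq> rel_interior S"
      using rel_interior_closure_convex_segment[OF assms(1,2)] that(4)
      by (simp add: rel_frontier_def)
    ultimately show False
      using that(3) by (auto simp: rel_frontier_def)
  qed
  then show ?thesis
    using less[of d e] less[of e d] assms(3-6) by (cases d e rule: linorder_cases) auto
qed

definition radial_projection :: "'a::real_normed_vector set \<Rightarrow> 'a \<Rightarrow> 'a \<Rightarrow> 'a" where
  "radial_projection S a x =
     a + (THE d. 0 < d \<and> a + d *\<^sub>R (x - a) \<in> rel_frontier S) *\<^sub>R (x - a)"

lemma rel_frontier_ray_scale_iff:
  fixes S :: "'a::euclidean_space set"
  assumes "convex S" "bounded S" "a \<in> rel_interior S" "affine hull S = UNIV" "l \<noteq> 0"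
  shows "0 < k \<and> a + k *\<^sub>R l \<in> rel_frontier S \<longleftrightarrow>
         (THE d. 0 < d \<and> a + d *\<^sub>R l \<in> rel_frontier S) = k"
proof -
  obtain d where d: "0 < d" "a + d *\<^sub>R l \<in> rel_frontier S"
    using ray_to_rel_frontier[OF assms(2,3)] assms(4,5) by blast
  note unique = ray_meets_rel_frontier_once[OF assms(1,3) _ d(1) _ d(2)]
  have "(THE d. 0 < d \<and> a + d *\<^sub>R l \<in> rel_frontier S) = d"
    by (rule the_equality) (use d in \<open>blast dest: unique\<close>)+
  then show ?thesis
    using d by (blast dest: unique)
qed

lemma radial_projection:
  fixes S :: "'a::euclidean_space set"
  assumes "convex S" "bounded S" "a \<in> rel_interior S" "affine hull S = UNIV" "x \<noteq> a"
  shows "radial_projection S a x \<in> rel_frontier S"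
    and "\<exists>d>0. radial_projection S a x = a + d *\<^sub>R (x - a)"
proof -
  define d where "d = (THE d. 0 < d \<and> a + d *\<^sub>R (x - a) \<in> rel_frontier S)"
  have "0 < d \<and> a + d *\<^sub>R (x - a) \<in> rel_frontier S"
    using rel_frontier_ray_scale_iff[OF assms(1-4), of "x - a" d] assms(5) unfolding d_def by simp
  then show "radial_projection S a x \<in> rel_frontier S"
    and "\<exists>d>0. radial_projection S a x = a + d *\<^sub>R (x - a)"
    unfolding radial_projection_def d_def[symmetric] by blast+
qed

lemma radial_projection_rel_frontier:
  fixes S :: "'a::euclidean_space set"
  assumes "convex S" "bounded S" "a \<in> rel_interior S" "affine hull S = UNIV"
    and "x \<in> rel_frontier S"
  shows "radial_projection S a x = x"
proof -
  have "x \<noteq> a"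
    using assms(3,5) by (auto simp: rel_frontier_def)
  then have "(THE d. 0 < d \<and> a + d *\<^sub>R (x - a) \<in> rel_frontier S) = 1"
    using rel_frontier_ray_scale_iff[OF assms(1-4), of "x - a" 1] assms(5) by simp
  then show ?thesis
    by (simp add: radial_projection_def)
qed

lemma continuous_on_radial_projection:
  fixes S :: "'a::euclidean_space set"
  assumes "convex S" "bounded S" "a \<in> rel_interior S" "affine hull S = UNIV"
  shows "continuous_on (UNIV - {a}) (radial_projection S a)"
proof -
  define d where "d l = (THE d. 0 < d \<and> a + d *\<^sub>R l \<in> rel_frontier S)" for l
  have "continuous_on (UNIV - {0}) (\<lambda>l. d l *\<^sub>R l)"
  proof (rule continuous_on_compact_surface_projection)
    show "compact ((\<lambda>z. z - a) ` rel_frontier S)"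
      by (intro compact_translation_subtract compact_rel_frontier_bounded assms(2))
    show "(\<lambda>z. z - a) ` rel_frontier S \<subseteq> UNIV - {0}"
      using assms(3) by (auto simp: rel_frontier_def)
    show "0 < k \<and> k *\<^sub>R l \<in> (\<lambda>z. z - a) ` rel_frontier S \<longleftrightarrow> d l = k"
      if "l \<in> UNIV - {0}" for l k
    proof -
      have "k *\<^sub>R l \<in> (\<lambda>z. z - a) ` rel_frontier S \<longleftrightarrow> a + k *\<^sub>R l \<in> rel_frontier S"
        by (auto simp: image_iff algebra_simps)
      then show ?thesis
        using rel_frontier_ray_scale_iff[OF assms, of l k] that by (simp add: d_def)
    qed
  qed (simp add: cone_def)
  then have "continuous_on (UNIV - {a}) (\<lambda>x. d (x - a) *\<^sub>R (x - a))"
    by (rule continuous_on_compose2) (auto intro: continuous_on_diff continuous_on_id continuous_on_const)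
  then have "continuous_on (UNIV - {a}) (\<lambda>x. a + d (x - a) *\<^sub>R (x - a))"
    by (rule continuous_on_add[OF continuous_on_const])
  then show ?thesis
    by (simp add: radial_projection_def d_def)
qed

lemma face_segment_directions_independent:
  fixes S :: "'a::euclidean_space set"
  assumes "convex S" "closed_segment u w face_of S" "closed_segment u w \<noteq> S" "u \<noteq> w"
    and "z \<in> rel_interior S" "c1 *\<^sub>R (u - z) + c2 *\<^sub>R (w - z) = 0"
  shows "c1 = 0 \<and> c2 = 0"
proof (cases "c1 + c2 = 0")
  case True
  then have "c2 = - c1"
    by simp
  then have "c1 *\<^sub>R (u - w) = 0"
    using assms(6) by (simp add: algebra_simps)
  then show ?thesis
    using True assms(4) by simp
next
  case False
  have "z = inverse (c1 + c2) *\<^sub>R ((c1 + c2) *\<^sub>R z)"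
    using False by simp
  also have "(c1 + c2) *\<^sub>R z = c1 *\<^sub>R u + c2 *\<^sub>R w"
    using assms(6) by (simp add: algebra_simps)
  finally have "z = (c1 / (c1 + c2)) *\<^sub>R u + (c2 / (c1 + c2)) *\<^sub>R w"
    by (simp add: scaleR_add_right divide_inverse mult.commute)
  moreover have "c1 / (c1 + c2) + c2 / (c1 + c2) = 1"
    using False by (simp add: add_divide_distrib[symmetric])
  ultimately have "z \<in> affine hull (closed_segment u w)"
    unfolding affine_hull_closed_segment affine_hull_2 by blast
  moreover have "z \<in> S"
    using assms(5) rel_interior_subset by blast
  ultimately have "z \<in> closed_segment u w"
    using face_of_imp_eq_affine_Int[OF assms(1,2)] by blast
  then show ?thesis
    using face_of_disjoint_rel_interior[OF assms(2,3)] assms(5) by blast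
qed

lemma radial_projection_avoids_face_segment:
  fixes S :: "'a::euclidean_space set"
  assumes "convex S" "bounded S" "affine hull S = UNIV"
    and "closed_segment u w face_of S" "closed_segment u w \<noteq> S" "u \<noteq> w" "z \<in> rel_interior S"
    and y: "y - z = c1 *\<^sub>R (u - z) + c2 *\<^sub>R (w - z)"
    and c: "c1 \<le> 0 \<or> c2 \<le> 0" "c1 \<noteq> 0 \<or> c2 \<noteq> 0"
  shows "y \<noteq> z" "radial_projection S z y \<notin> open_segment u w"
proof -
  note independent = face_segment_directions_independent[OF assms(1,4-7)]
  show "y \<noteq> z"
    using independent[of c1 c2] y c(2) by auto
  then obtain d where d: "0 < d" "radial_projection S z y = z + d *\<^sub>R (y - z)"
    using radial_projection(2)[OF assms(1,2,7,3)] by blast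
  show "radial_projection S z y \<notin> open_segment u w"
  proof
    assume "radial_projection S z y \<in> open_segment u w"
    then obtain m where m: "0 < m" "m < 1" "radial_projection S z y = (1 - m) *\<^sub>R u + m *\<^sub>R w"
      unfolding in_segment by blast
    have "(d * c1 - (1 - m)) *\<^sub>R (u - z) + (d * c2 - m) *\<^sub>R (w - z) = 0"
      using d(2) m(3) y by (simp add: algebra_simps)
    then have "d * c1 - (1 - m) = 0 \<and> d * c2 - m = 0"
      by (rule independent)
    then have "0 < d * c1" "0 < d * c2"
      using m(1,2) by auto
    then show False
      using c(1) d(1) by (simp add: zero_less_mult_iff)
  qed
qed

text \<open>Seen from z, the point q = z - (u - z) - (w - z) lies opposite to the edge uw, so the
  broken line from w over q to u is projected to the boundary outside the open edge.\<close>
lemma radial_projection_opposite_segments: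
  fixes S :: "'a::euclidean_space set"
  assumes "convex S" "bounded S" "affine hull S = UNIV"
    and "closed_segment u w face_of S" "closed_segment u w \<noteq> S" "u \<noteq> w" "z \<in> rel_interior S"
    and "y \<in> closed_segment w (z - (u - z) - (w - z)) \<union> closed_segment (z - (u - z) - (w - z)) u"
  shows "y \<noteq> z \<and> radial_projection S z y \<notin> open_segment u w"
proof -
  note avoid = radial_projection_avoids_face_segment[OF assms(1-7)]
  define q where "q = z - (u - z) - (w - z)"
  from assms(8)[folded q_def] consider "y \<in> closed_segment w q" | "y \<in> closed_segment q u"
    by blast
  then show ?thesis
  proof cases
    case 1
    then obtain s where s: "0 \<le> s" "y = (1 - s) *\<^sub>R w + s *\<^sub>R q"
      unfolding in_segment by blast
    have y: "y - z = (- s) *\<^sub>R (u - z) + (1 - 2 * s) *\<^sub>R (w - z)"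
      using s(2) by (simp add: q_def algebra_simps scaleR_2 flip: scaleR_scaleR)
    have "- s \<le> 0 \<or> 1 - 2 * s \<le> 0" "- s \<noteq> 0 \<or> 1 - 2 * s \<noteq> 0"
      using s(1) by linarith+
    then show ?thesis
      using avoid[OF y] by blast
  next
    case 2
    then obtain s where s: "s \<le> 1" "y = (1 - s) *\<^sub>R q + s *\<^sub>R u"
      unfolding in_segment by blast
    have y: "y - z = (2 * s - 1) *\<^sub>R (u - z) + (s - 1) *\<^sub>R (w - z)"
      using s(2) by (simp add: q_def algebra_simps scaleR_2 flip: scaleR_scaleR)
    have "2 * s - 1 \<le> 0 \<or> s - 1 \<le> 0" "2 * s - 1 \<noteq> 0 \<or> s - 1 \<noteq> 0"
      using s(1) by linarith+
    then show ?thesis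
      using avoid[OF y] by blast
  qed
qed

lemma rel_frontier_path_avoiding_segment:
  fixes S :: "'a::euclidean_space set"
  assumes "convex S" "bounded S" "affine hull S = UNIV"
    and "closed_segment u w face_of S" "closed_segment u w \<noteq> S" "u \<noteq> w"
  obtains g where "path g" "pathstart g = w" "pathfinish g = u"
    "path_image g \<subseteq> rel_frontier S - open_segment u w"
proof -
  have "S \<noteq> {}"
    using face_of_imp_subset[OF assms(4)] by auto
  then obtain z where z: "z \<in> rel_interior S"
    using rel_interior_eq_empty[OF assms(1)] by blast
  define r where "r = radial_projection S z"
  define q where "q = z - (u - z) - (w - z)"
  note avoid = radial_projection_opposite_segments[OF assms z, folded q_def r_def]
  have uw: "u \<in> rel_frontier S" "w \<in> rel_frontier S"
    using face_of_imp_subset[OF assms(4)] face_of_disjoint_rel_interior[OF assms(4,5)]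
      closure_subset by (auto simp: rel_frontier_def)
  have cont: "continuous_on (closed_segment a b) r" if "z \<notin> closed_segment a b" for a b
    using continuous_on_subset[OF continuous_on_radial_projection[OF assms(1,2) z assms(3)]] that
    unfolding r_def by blast
  define g1 g2 where "g1 = r \<circ> linepath w q" and "g2 = r \<circ> linepath q u"
  have "path g1" "path g2"
    unfolding g1_def g2_def using avoid cont
    by (metis Un_iff path_continuous_image path_linepath path_image_linepath)+
  moreover have "pathstart g1 = w" "pathfinish g1 = pathstart g2" "pathfinish g2 = u"
    using radial_projection_rel_frontier[OF assms(1,2) z assms(3)] uw
    by (simp_all add: g1_def g2_def r_def pathstart_compose pathfinish_compose)
  moreover have "path_image g1 \<union> path_image g2 \<subseteq> rel_frontier S - open_segment u w"
    using avoid radial_projection(1)[OF assms(1,2) z assms(3)]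
    unfolding g1_def g2_def path_image_compose path_image_linepath r_def by blast
  ultimately show ?thesis
    using that[of "g1 +++ g2"] path_image_join_subset[of g1 g2] by auto
qed

section \<open>A fixed point argument\<close>

lemma continuous_on_glued_paths:
  fixes p q :: "'a::topological_space \<Rightarrow> real" and g1 g2 :: "real \<Rightarrow> 'b::topological_space"
  assumes "closed H" "continuous_on H p" "continuous_on H q" "p ` H \<subseteq> {0..1}"
    and degenerate: "\<And>x. x \<in> H \<Longrightarrow> p x = 0 \<or> q x = 0 \<or> p x + q x = 1"
    and "path g1" "path g2" "g1 0 = g2 0" "g1 1 = g2 1"
  shows "continuous_on H (\<lambda>x. if q x = 0 then g1 (p x) else g2 (p x))"
    (is "continuous_on H ?h")
proof -
  define A B where "A = {x \<in> H. q x = 0}" and "B = {x \<in> H. p x = 0} \<union> {x \<in> H. p x + q x = 1}"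
  have "closed {x \<in> H. p x + q x = 1}"
    by (rule continuous_closed_preimage_constant[OF continuous_on_add[OF assms(2,3)] assms(1)])
  then have "closed A" "closed B"
    unfolding A_def B_def using continuous_closed_preimage_constant[OF _ assms(1)] assms(2,3)
    by auto
  have comp: "continuous_on S (g \<circ> p)" if "path g" "S \<subseteq> H" for g and S
  proof (rule continuous_on_compose)
    show "continuous_on S p"
      using continuous_on_subset[OF assms(2) that(2)] .
    show "continuous_on (p ` S) g"
      using that(2) assms(4) by (intro continuous_on_subset[OF that(1)[unfolded path_def]]) auto
  qed
  have "continuous_on A ?h"
    by (rule continuous_on_eq[OF comp[OF assms(6)]]) (auto simp: A_def)
  moreover have "continuous_on B ?h"
    by (rule continuous_on_eq[OF comp[OF assms(7)]]) (auto simp: B_def assms(8,9))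
  moreover have "H \<subseteq> A \<union> B"
    using degenerate unfolding A_def B_def by blast
  ultimately show ?thesis
    using continuous_on_subset[OF continuous_on_closed_Un] \<open>closed A\<close> \<open>closed B\<close> by metis
qed

lemma exists_three_positive_weights:
  fixes H :: "'a::euclidean_space set" and p q :: "'a \<Rightarrow> real"
  assumes "compact H" "convex H" "continuous_on H p" "continuous_on H q"
    and weights: "\<And>x. x \<in> H \<Longrightarrow> 0 \<le> p x \<and> 0 \<le> q x \<and> p x + q x \<le> 1"
    and "u \<in> H" "w \<in> H" "p u = 0" "p w = 1" "\<And>x. x \<in> closed_segment u w \<Longrightarrow> q x = 0"
    and g: "path g" "pathstart g = w" "pathfinish g = u" "path_image g \<subseteq> H"
    and "\<And>x. x \<in> path_image g \<Longrightarrow> q x = 0 \<Longrightarrow> p x = 0 \<or> p x = 1"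
  shows "\<exists>x\<in>H. p x \<noteq> 0 \<and> q x \<noteq> 0 \<and> p x + q x \<noteq> 1"
proof (rule ccontr)
  assume "\<not> ?thesis"
  then have degenerate: "p x = 0 \<or> q x = 0 \<or> p x + q x = 1" if "x \<in> H" for x
    using that by blast
  have p01: "p ` H \<subseteq> {0..1}"
    using weights by fastforce
  have ends: "g 0 = linepath w u 0" "g 1 = linepath w u 1"
    using g(2,3) by (simp_all add: pathstart_def pathfinish_def linepath_def)
  define h where "h x = (if q x = 0 then g (p x) else linepath w u (p x))" for x
  have "continuous_on H h"
    unfolding h_def using compact_imp_closed[OF assms(1)] assms(3,4) p01 degenerate g(1) path_linepath ends
    by (rule continuous_on_glued_paths)
  moreover have "h ` H \<subseteq> path_image g \<union> closed_segment w u"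
    using p01 by (auto simp: h_def path_image_def simp flip: path_image_linepath)
  then have "h \<in> H \<rightarrow> H"
    using g(4) closed_segment_subset[OF assms(7,6,2)] by blast
  ultimately obtain x where x: "x \<in> H" "h x = x"
    using brouwer[OF assms(1,2)] assms(6) by blast
  have px: "p x \<in> {0..1}"
    using p01 x(1) by blast
  show False
  proof (cases "q x = 0")
    case True
    then have gx: "x = g (p x)"
      using x(2) by (simp add: h_def)
    then have "x \<in> path_image g"
      using px unfolding path_image_def by blast
    then have "p x = 0 \<or> p x = 1"
      using assms(15) True by blast
    then show False
      using gx g(2,3) assms(8,9) by (auto simp: pathstart_def pathfinish_def)
  next
    case False
    then have "x = linepath w u (p x)"
      using x(2) by (simp add: h_def)
    then have "x \<in> closed_segment w u"
      using px unfolding path_image_linepath[symmetric] path_image_def by blast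
    then show False
      using False assms(10) closed_segment_commute by blast
  qed
qed

section \<open>Sperner labellings of convex polygons\<close>

lemma polygon_edge_through:
  fixes H :: "'a::euclidean_space set"
  assumes "polytope H" "aff_dim H = 2" "x \<in> rel_frontier H"
  obtains y z where "y \<in> extreme_points H" "z \<in> extreme_points H" "y \<noteq> z"
    "closed_segment y z face_of H" "x \<in> closed_segment y z"
proof -
  obtain F where F: "F facet_of H" "x \<in> F"
    using assms(3) rel_frontier_of_polyhedron[OF polytope_imp_polyhedron[OF assms(1)]] by blast
  then have face: "F face_of H" and "aff_dim F = 1"
    using assms(2) by (auto simp: facet_of_def)
  have "polytope F"
    using face_of_polytope_polytope[OF assms(1) face] .
  moreover have "collinear F"
    using \<open>aff_dim F = 1\<close> by (simp add: collinear_aff_dim)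
  ultimately obtain y z where yz: "F = closed_segment y z"
    using compact_convex_collinear_segment F(2) polytope_imp_compact polytope_imp_convex
    by (metis empty_iff)
  have "y \<noteq> z"
    using \<open>aff_dim F = 1\<close> yz by auto
  moreover have "y \<in> extreme_points H" "z \<in> extreme_points H"
    using extreme_point_of_face[OF face] yz extreme_point_of_segment
    by (auto simp: extreme_points_def)
  ultimately show ?thesis
    using that yz face F(2) by blast
qed

lemma rel_frontier_nonempty_aff_dim_pos:
  fixes H :: "'a::euclidean_space set"
  assumes "convex H" "bounded H" "0 < aff_dim H"
  shows "rel_frontier H \<noteq> {}"
proof
  assume "rel_frontier H = {}"
  then have "affine H"
    using rel_frontier_eq_empty by blast
  then have "H = {} \<or> (\<exists>a. H = {a})"
    using affine_bounded_eq_trivial assms(2) by blast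
  then show False
    using assms(3) by auto
qed

locale sperner_polygon =
  fixes H :: "(real^2) set" and c :: nat and T :: "(real^2) set set" and L :: "real^2 \<Rightarrow> nat"
  assumes polygon: "convex_polygon H c"
    and triangulated: "triangulation_of T H"
    and sperner: "sperner_labelling H c T L"
begin

lemma H_polytope: "polytope H" and H_aff_dim: "aff_dim H = 2"
  using polygon by (auto simp: convex_polygon_def)

lemma T_triangulation: "triangulation T"
  and T_simplices: "\<forall>t\<in>T. int DIM(real^2) simplex t"
  and Union_T: "\<Union>T = H"
  and H_vertices_in_T: "extreme_points H \<subseteq> tri_vertices T"
  using triangulated by (auto simp: triangulation_of_def polygon_vertices_def extreme_points_def)

lemma H_rel_frontier_subset: "rel_frontier H \<subseteq> H"
  using polytope_imp_closed[OF H_polytope] by (simp add: rel_frontier_def closure_closed)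

lemma vertex_labels_distinct:
  assumes "u \<in> extreme_points H" "w \<in> extreme_points H" "u \<noteq> w"
  shows "L u \<noteq> L w"
proof -
  have "inj_on L (extreme_points H)"
    using sperner by (simp add: sperner_labelling_def polygon_vertices_def extreme_points_def)
  then show ?thesis
    using assms inj_onD by metis
qed

lemma label_on_edge:
  assumes "u \<in> extreme_points H" "w \<in> extreme_points H" "u \<noteq> w" "closed_segment u w face_of H"
    and "t \<in> T" "v \<in> extreme_points t" "v \<in> closed_segment u w"
  shows "L v = L u \<or> L v = L w"
proof -
  have "v \<in> tri_vertices T"
    using assms(5,6) by (auto simp: tri_vertices_def extreme_points_def)
  then show ?thesis
    using sperner assms(1-4,7)
    unfolding sperner_labelling_def polygon_vertices_def extreme_points_def by blast
qed

definition label_weight :: "nat set \<Rightarrow> real^2 \<Rightarrow> real" where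
  "label_weight C = pl_extension T (\<lambda>v. of_bool (L v \<in> C))"

lemma continuous_on_label_weight: "continuous_on H (label_weight C)"
  unfolding label_weight_def using continuous_on_pl_extension[OF T_triangulation T_simplices] Union_T
  by simp

lemma label_weight_nonneg: "x \<in> H \<Longrightarrow> 0 \<le> label_weight C x"
  unfolding label_weight_def using Union_T by (intro pl_extension_nonneg[OF T_triangulation T_simplices]) auto

lemma label_weights_sum:
  assumes "x \<in> H" "a \<noteq> b"
  shows "label_weight {a} x + label_weight {b} x + label_weight (- {a, b}) x = 1"
proof -
  have "(\<lambda>v. of_bool (L v \<in> {a}) + of_bool (L v \<in> {b}) + of_bool (L v \<in> - {a, b})) = (\<lambda>v. 1::real)"
    using assms(2) by auto
  then show ?thesis
    using pl_extension_const[OF T_triangulation T_simplices, of x 1] assms(1) Union_T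
    by (simp add: label_weight_def flip: pl_extension_add)
qed

lemma label_weight_vertex:
  assumes "v \<in> extreme_points H"
  shows "label_weight C v = of_bool (L v \<in> C)"
proof -
  obtain t where "t \<in> T" "v \<in> extreme_points t"
    using assms H_vertices_in_T by (auto simp: tri_vertices_def extreme_points_def)
  then show ?thesis
    unfolding label_weight_def by (rule pl_extension_vertex[OF T_triangulation T_simplices])
qed

lemma label_weight_on_edge:
  assumes "y \<in> extreme_points H" "z \<in> extreme_points H" "y \<noteq> z"
    and "closed_segment y z face_of H" "x \<in> closed_segment y z"
    and "L y \<notin> C" "L z \<notin> C"
  shows "label_weight C x = 0"
  unfolding label_weight_def
proof (rule pl_extension_on_face[OF T_triangulation T_simplices])
  show "polyhedron (\<Union>T)" "closed_segment y z face_of \<Union>T"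
    using polytope_imp_polyhedron[OF H_polytope] assms(4) Union_T by simp_all
  fix t v assume "t \<in> T" "v \<in> extreme_points t" "v \<in> closed_segment y z"
  then have "L v = L y \<or> L v = L z"
    using label_on_edge[OF assms(1-4)] by blast
  then show "of_bool (L v \<in> C) = (0::real)"
    using assms(6,7) by auto
qed (rule assms(5))

lemma label_weight_on_rel_frontier:
  assumes u: "u \<in> extreme_points H" and w: "w \<in> extreme_points H"
    and "u \<noteq> w" "closed_segment u w face_of H"
    and x: "x \<in> rel_frontier H" "x \<notin> open_segment u w" "label_weight (- {L u, L w}) x = 0"
  shows "label_weight {L w} x = 0 \<or> label_weight {L w} x = 1"
proof -
  have Lu_Lw: "L u \<noteq> L w"
    using vertex_labels_distinct[OF u w assms(3)] .
  have "x \<in> H"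
    using x(1) H_rel_frontier_subset by blast
  obtain y z where yz: "y \<in> extreme_points H" "z \<in> extreme_points H" "y \<noteq> z"
    "closed_segment y z face_of H" "x \<in> closed_segment y z"
    using polygon_edge_through[OF H_polytope H_aff_dim x(1)] by blast
  have "closed_segment y z = closed_segment u w" if "u \<in> {y, z}" "w \<in> {y, z}"
    using that assms(3) by (auto simp: closed_segment_commute)
  then consider "x = u" | "x = w" | "u \<notin> {y, z}" | "w \<notin> {y, z}"
    using x(2) yz(5) unfolding open_segment_def by blast
  then show ?thesis
  proof cases
    case 3
    then have "label_weight {L u} x = 0"
      using vertex_labels_distinct[OF u yz(1)] vertex_labels_distinct[OF u yz(2)] 3
      by (intro label_weight_on_edge[OF yz]) auto
    then show ?thesis
      using label_weights_sum[OF \<open>x \<in> H\<close> Lu_Lw] x(3) by simp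
  next
    case 4
    then show ?thesis
      using vertex_labels_distinct[OF w yz(1)] vertex_labels_distinct[OF w yz(2)] 4
      by (intro disjI1 label_weight_on_edge[OF yz]) auto
  qed (use label_weight_vertex u w Lu_Lw in auto)
qed

lemma fully_labelled_of_label_weights:
  assumes "x \<in> H" "a \<noteq> b"
    and "label_weight {a} x \<noteq> 0" "label_weight {b} x \<noteq> 0" "label_weight (- {a, b}) x \<noteq> 0"
  shows "\<exists>t\<in>T. card (L ` extreme_points t) = 3"
proof -
  obtain t where t: "t \<in> T" "x \<in> t"
    using assms(1) Union_T by blast
  note V = full_simplex_extreme_points(1,3)[OF bspec[OF T_simplices t(1)]]
  note nonzero = pl_extension_nonzero[OF T_triangulation T_simplices t]
  obtain va vb vc where v: "va \<in> extreme_points t" "vb \<in> extreme_points t" "vc \<in> extreme_points t"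
    and "L va = a" "L vb = b" "L vc \<notin> {a, b}"
    using nonzero[OF assms(3)[unfolded label_weight_def]] nonzero[OF assms(4)[unfolded label_weight_def]]
      nonzero[OF assms(5)[unfolded label_weight_def]] by auto
  then have "3 = card {L va, L vb, L vc}"
    using assms(2) by auto
  also have "\<dots> \<le> card (L ` extreme_points t)"
    using v V(1) by (intro card_mono) auto
  finally have "3 \<le> card (L ` extreme_points t)" .
  moreover have "card (L ` extreme_points t) \<le> 3"
    using card_image_le[OF V(1), of L] V(2) by simp
  ultimately show ?thesis
    using t(1) by (intro bexI[of _ t]) auto
qed

lemma H_edge_exists:
  obtains u w where "u \<in> extreme_points H" "w \<in> extreme_points H" "u \<noteq> w"
    "closed_segment u w face_of H"
proof -
  have "rel_frontier H \<noteq> {}"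
    using rel_frontier_nonempty_aff_dim_pos[OF polytope_imp_convex[OF H_polytope]
        polytope_imp_bounded[OF H_polytope]] H_aff_dim by simp
  then obtain x where "x \<in> rel_frontier H"
    by blast
  then show ?thesis
    using polygon_edge_through[OF H_polytope H_aff_dim] that by blast
qed

lemma boundary_path_avoiding_edge:
  assumes "closed_segment u w face_of H" "u \<noteq> w"
  obtains g where "path g" "pathstart g = w" "pathfinish g = u"
    "path_image g \<subseteq> rel_frontier H - open_segment u w"
proof -
  have "closed_segment u w \<noteq> H"
    using H_aff_dim collinear_closed_segment[of u w] by (auto simp: collinear_aff_dim)
  moreover have "affine hull H = UNIV"
    using H_aff_dim aff_dim_eq_full[of H] by simp
  ultimately show ?thesis
    using rel_frontier_path_avoiding_segment[OF polytope_imp_convex[OF H_polytope]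
        polytope_imp_bounded[OF H_polytope] _ assms(1) _ assms(2)] that by blast
qed

theorem exists_fully_labelled: "\<exists>t\<in>T. card (L ` extreme_points t) = 3"
proof -
  obtain u w where u: "u \<in> extreme_points H" and w: "w \<in> extreme_points H"
    and uw: "u \<noteq> w" "closed_segment u w face_of H"
    using H_edge_exists by blast
  have Lu_Lw: "L u \<noteq> L w"
    using vertex_labels_distinct[OF u w uw(1)] .
  obtain g where g: "path g" "pathstart g = w" "pathfinish g = u"
    "path_image g \<subseteq> rel_frontier H - open_segment u w"
    using boundary_path_avoiding_edge[OF uw(2,1)] by blast
  have "\<exists>x\<in>H. label_weight {L w} x \<noteq> 0 \<and> label_weight (- {L u, L w}) x \<noteq> 0 \<and>
              label_weight {L w} x + label_weight (- {L u, L w}) x \<noteq> 1"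
  proof (rule exists_three_positive_weights[OF polytope_imp_compact[OF H_polytope]
        polytope_imp_convex[OF H_polytope] continuous_on_label_weight continuous_on_label_weight _ _ _ _ _ _ g(1-3)])
    show "\<And>x. x \<in> H \<Longrightarrow> 0 \<le> label_weight {L w} x \<and> 0 \<le> label_weight (- {L u, L w}) x \<and>
        label_weight {L w} x + label_weight (- {L u, L w}) x \<le> 1"
      using label_weights_sum[OF _ Lu_Lw] label_weight_nonneg by (smt (verit))
    show "u \<in> H" "w \<in> H" "label_weight {L w} u = 0" "label_weight {L w} w = 1"
      using u w Lu_Lw label_weight_vertex extreme_points_subset by auto
    show "\<And>x. x \<in> closed_segment u w \<Longrightarrow> label_weight (- {L u, L w}) x = 0"
      using u w uw by (intro label_weight_on_edge) auto
    show "path_image g \<subseteq> H"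
      using g(4) H_rel_frontier_subset by blast
    show "\<And>x. x \<in> path_image g \<Longrightarrow> label_weight (- {L u, L w}) x = 0 \<Longrightarrow>
        label_weight {L w} x = 0 \<or> label_weight {L w} x = 1"
      using label_weight_on_rel_frontier[OF u w uw] g(4) by blast
  qed
  then show ?thesis
    using fully_labelled_of_label_weights[OF _ Lu_Lw] label_weights_sum[OF _ Lu_Lw] by force
qed

end

theorem mainTheorem2:
  fixes H :: "(real^2) set" and c :: nat and T :: "(real^2) set set" and L :: "real^2 \<Rightarrow> nat"
  assumes "c \<ge> 3"
    and "convex_polygon H c"
    and "triangulation_of T H"
    and "sperner_labelling H c T L"
  shows "\<exists>t\<in>T. card (L ` {v. v extreme_point_of t}) = 3"
proof -
  interpret sperner_polygon H c T L
    using assms(2-4) by unfold_locales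
  show ?thesis
    using exists_fully_labelled by (simp add: extreme_points_def)
qed

end
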